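(* Let $A$ be an entrywise non-negative $d\times d$ matrix with $\rho(A)<1$, let $M=(I-A^T)(I-A)$, and let $\mu$ be the smallest eigenvalue of $M$. Then $\mu>0$ and $M$ has an entrywise non-negative eigenvector $\mathbf v$ with $\|\mathbf v\|=1$ associated with $\mu$. Moreover, with $r=\sqrt\mu$, the vector $\mathbf u=\frac1r(I-A)\mathbf v$ and the matrix $X=A+r\,\mathbf u\,\mathbf v^T$ are both entrywise non-negative, $\rho(X)\ge 1$, $\|X-A\|=r$, and for every real $d\times d$ matrix $Y$ with $\rho(Y)\ge 1$ one has $\|Y-A\|\ge r$. In other words, $X$ is a closest matrix to $A$ (among all real matrices) with spectral radius at least one, and it is non-negative.
   Context: $\rho(\cdot)$ denotes the spectral radius. For matrices, $\|X\|=\sqrt{\operatorname{tr}(X^TX)}=\sqrt{\sum_{i,j}x_{ij}^2}$ is the Frobenius norm; for vectors, $\|\cdot\|$ is the Euclidean norm. Inequalities between vectors or matrices are entrywise. *)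

theory Defs
  imports "Jordan_Normal_Form.Spectral_Radius"
begin

definition real_spectral_radius :: "real mat \<Rightarrow> real" where
  "real_spectral_radius A = spectral_radius (map_mat complex_of_real A)"

definition frob_norm :: "real mat \<Rightarrow> real" where
  "frob_norm A = sqrt (\<Sum>i<dim_row A. \<Sum>j<dim_col A. (A $$ (i,j))^2)"

definition vec_norm :: "real vec \<Rightarrow> real" where
  "vec_norm v = sqrt (\<Sum>i<dim_vec v. (v $ i)^2)"

definition nonneg_mat :: "real mat \<Rightarrow> bool" where
  "nonneg_mat A \<longleftrightarrow> (\<forall>i<dim_row A. \<forall>j<dim_col A. A $$ (i,j) \<ge> 0)"

definition nonneg_vec :: "real vec \<Rightarrow> bool" where
  "nonneg_vec v \<longleftrightarrow> (\<forall>i<dim_vec v. v $ i \<ge> 0)"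

definition outer_prod :: "real vec \<Rightarrow> real vec \<Rightarrow> real mat" where
  "outer_prod u v = mat (dim_vec u) (dim_vec v) (\<lambda>(i,j). u $ i * v $ j)"

end

theory Submission
  imports Defs "HOL-Analysis.Function_Topology" "HOL-Analysis.Convex"
begin

text \<open>
  Write \<open>N = I - A\<close>. Since \<open>A \<ge> 0\<close> and \<open>\<rho>(A) < 1\<close>, \<open>N\<close> is inverse-positive: \<open>N p \<ge> 0\<close>
  forces \<open>p \<ge> 0\<close>, for otherwise the negative part \<open>m\<close> of \<open>p\<close> would satisfy \<open>0 \<le> m \<le> A m\<close>.
  The number \<open>\<mu>\<close> is the minimum of \<open>\<parallel>N x\<parallel>\<^sup>2\<close> over unit vectors \<open>x\<close>.

  Lower bound: if \<open>Y z = \<lambda> z\<close> with \<open>\<bar>\<lambda>\<bar> \<ge> 1\<close>, then \<open>a = \<bar>z\<bar>\<close> satisfies \<open>N a \<le> b = \<bar>(Y - A) z\<bar>\<close>,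
  hence \<open>0 \<le> a \<le> N\<^sup>-\<^sup>1 b\<close> and \<open>\<mu> \<parallel>a\<parallel>\<^sup>2 \<le> \<mu> \<parallel>N\<^sup>-\<^sup>1 b\<parallel>\<^sup>2 \<le> \<parallel>b\<parallel>\<^sup>2 \<le> \<parallel>Y - A\<parallel>\<^sup>2 \<parallel>a\<parallel>\<^sup>2\<close>.

  Optimality: for a unit minimiser \<open>x\<close>, the vector \<open>v = N\<^sup>-\<^sup>1 \<bar>N x\<bar>\<close> dominates \<open>\<bar>x\<bar>\<close>, so
  \<open>\<parallel>v\<parallel> \<ge> 1\<close> while \<open>\<parallel>N v\<parallel>\<^sup>2 = \<mu>\<close>; hence \<open>v\<close> is a non-negative unit minimiser, i.e. an
  eigenvector of \<open>N\<^sup>T N\<close>. The rank-one correction \<open>X = A + (N v) v\<^sup>T\<close> fixes \<open>v\<close>, and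
  \<open>\<parallel>X - A\<parallel> = \<parallel>N v\<parallel> = \<surd>\<mu>\<close>.
\<close>

unbundle no inner_syntax

lemma scalar_prod_eq_sum:
  fixes x y :: "'a :: comm_semiring_0 vec"
  shows "x \<in> carrier_vec d \<Longrightarrow> y \<in> carrier_vec d \<Longrightarrow> x \<bullet> y = (\<Sum>i<d. x $ i * y $ i)"
  by (simp add: scalar_prod_def lessThan_atLeast0)

lemma scalar_prod_self_eq_sum_squares:
  fixes x :: "real vec"
  shows "x \<in> carrier_vec d \<Longrightarrow> x \<bullet> x = (\<Sum>i<d. (x $ i)\<^sup>2)"
  by (simp add: scalar_prod_eq_sum power2_eq_square)

lemma mult_mat_vec_index_sum:
  "M \<in> carrier_mat n d \<Longrightarrow> x \<in> carrier_vec d \<Longrightarrow> i < n \<Longrightarrow>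
    (M *\<^sub>v x) $ i = (\<Sum>j<d. M $$ (i,j) * x $ j)"
  by (simp add: scalar_prod_def lessThan_atLeast0)

lemma vec_norm_eq_sqrt_scalar_prod:
  fixes x :: "real vec"
  shows "vec_norm x = sqrt (x \<bullet> x)"
  by (simp add: vec_norm_def scalar_prod_def lessThan_atLeast0 power2_eq_square)

lemma scalar_prod_self_nonneg:
  fixes x :: "real vec"
  shows "0 \<le> x \<bullet> x"
  by (simp add: scalar_prod_def sum_nonneg)

lemma scalar_prod_self_pos:
  fixes x :: "real vec"
  assumes x: "x \<in> carrier_vec d" and "x \<noteq> 0\<^sub>v d"
  shows "0 < x \<bullet> x"
proof -
  obtain i where i: "i < d" "x $ i \<noteq> 0"
    using assms by (metis eq_vecI carrier_vecD index_zero_vec)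
  then have "0 < (x $ i)\<^sup>2" by simp
  also have "\<dots> \<le> (\<Sum>i<d. (x $ i)\<^sup>2)" by (rule member_le_sum) (use i in auto)
  finally show ?thesis using x by (simp add: scalar_prod_self_eq_sum_squares)
qed

lemma scalar_prod_self_mono:
  fixes x y :: "real vec"
  assumes "x \<in> carrier_vec d" "y \<in> carrier_vec d" and "\<And>i. i < d \<Longrightarrow> \<bar>x $ i\<bar> \<le> y $ i"
  shows "x \<bullet> x \<le> y \<bullet> y"
proof -
  have "(x $ i)\<^sup>2 \<le> (y $ i)\<^sup>2" if "i < d" for i
    using power_mono[OF assms(3)[OF that] abs_ge_zero, of 2] by simp
  then show ?thesis
    unfolding scalar_prod_self_eq_sum_squares[OF assms(1)] scalar_prod_self_eq_sum_squares[OF assms(2)]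
    by (intro sum_mono) auto
qed

lemma scalar_prod_add_smult_self:
  fixes x y :: "real vec"
  assumes "x \<in> carrier_vec d" "y \<in> carrier_vec d"
  shows "(x + t \<cdot>\<^sub>v y) \<bullet> (x + t \<cdot>\<^sub>v y) = x \<bullet> x + 2 * t * (x \<bullet> y) + t\<^sup>2 * (y \<bullet> y)"
proof -
  have "(x + t \<cdot>\<^sub>v y) \<bullet> (x + t \<cdot>\<^sub>v y) = (\<Sum>i<d. x$i*x$i + 2*t*(x$i*y$i) + t\<^sup>2*(y$i*y$i))"
    using assms by (simp add: scalar_prod_eq_sum[of _ d] algebra_simps power2_eq_square)
  then show ?thesis
    using assms by (simp add: scalar_prod_eq_sum[of _ d] sum.distrib sum_distrib_left)
qed

lemma less_eq_vec_iff:
  "x \<in> carrier_vec d \<Longrightarrow> y \<in> carrier_vec d \<Longrightarrow> x \<le> y \<longleftrightarrow> (\<forall>i<d. x $ i \<le> y $ i)"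
  by (simp add: less_eq_vec_def)

lemma nonneg_vec_iff: "v \<in> carrier_vec d \<Longrightarrow> nonneg_vec v \<longleftrightarrow> 0\<^sub>v d \<le> v"
  by (simp add: nonneg_vec_def less_eq_vec_def)

lemma nonneg_matD: "nonneg_mat P \<Longrightarrow> P \<in> carrier_mat n m \<Longrightarrow> i < n \<Longrightarrow> j < m \<Longrightarrow> 0 \<le> P $$ (i,j)"
  by (simp add: nonneg_mat_def)

lemma smult_vec_mono: "0 \<le> c \<Longrightarrow> x \<le> y \<Longrightarrow> c \<cdot>\<^sub>v x \<le> c \<cdot>\<^sub>v (y :: real vec)"
  by (auto simp: less_eq_vec_def mult_left_mono)

lemma smult_mat_mult_vec:
  "A \<in> carrier_mat n m \<Longrightarrow> v \<in> carrier_vec m \<Longrightarrow> (k \<cdot>\<^sub>m A) *\<^sub>v v = k \<cdot>\<^sub>v (A *\<^sub>v v)"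
  by (intro eq_vecI) (auto simp: scalar_prod_def sum_distrib_left ac_simps)

lemma mult_mat_vec_uminus:
  fixes P :: "'a :: comm_ring mat"
  shows "P \<in> carrier_mat n m \<Longrightarrow> v \<in> carrier_vec m \<Longrightarrow> P *\<^sub>v (- v) = - (P *\<^sub>v v)"
  by (intro eq_vecI) auto

lemma mult_mat_vec_zero:
  fixes P :: "'a :: comm_ring mat"
  shows "P \<in> carrier_mat n m \<Longrightarrow> P *\<^sub>v 0\<^sub>v m = 0\<^sub>v n"
  by (intro eq_vecI) auto

section \<open>The Rayleigh quotient of a Gram matrix\<close>

text \<open>Vectors of \<open>\<real>\<^sup>d\<close> are modelled here as functions \<open>nat \<Rightarrow> real\<close> vanishing from \<open>d\<close> on,
  so that compactness of the unit sphere follows from Tychonoff in the product topology.\<close>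
lemma continuous_attains_min_on_unit_sphere:
  fixes Q :: "(nat \<Rightarrow> real) \<Rightarrow> real"
  assumes Qc: "continuous_on UNIV Q" and d: "d > 0"
  obtains x where "\<forall>i\<ge>d. x i = 0" "(\<Sum>i<d. (x i)\<^sup>2) = 1"
    "\<And>y. \<forall>i\<ge>d. y i = 0 \<Longrightarrow> (\<Sum>i<d. (y i)\<^sup>2) = 1 \<Longrightarrow> Q x \<le> Q y"
proof -
  define K where "K = PiE UNIV (\<lambda>i::nat. if i < d then {-1..1::real} else {0})"
  have "compactin (product_topology (\<lambda>_. euclidean) UNIV) K"
    unfolding K_def compactin_PiE by auto
  then have "compact K" by (simp add: euclidean_product_topology)
  define S where "S = K \<inter> {y. (\<Sum>i<d. (y i)\<^sup>2) = 1}"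
  have "continuous_on UNIV (\<lambda>y::nat\<Rightarrow>real. \<Sum>i<d. (y i)\<^sup>2)"
    by (intro continuous_on_sum continuous_on_power continuous_on_product_coordinates)
  then have "closed {y::nat\<Rightarrow>real. (\<Sum>i<d. (y i)\<^sup>2) = 1}"
    by (rule closed_Collect_eq[OF _ continuous_on_const])
  with \<open>compact K\<close> have "compact S" unfolding S_def by (rule compact_Int_closed)
  have in_S: "y \<in> S" if "\<forall>i\<ge>d. y i = 0" "(\<Sum>i<d. (y i)\<^sup>2) = 1" for y
  proof -
    have "\<bar>y i\<bar> \<le> 1" if i: "i < d" for i
    proof -
      have "(y i)\<^sup>2 \<le> (\<Sum>i<d. (y i)\<^sup>2)" by (rule member_le_sum) (use i in auto)
      then show ?thesis using \<open>(\<Sum>i<d. (y i)\<^sup>2) = 1\<close> abs_le_square_iff[of "y i" 1] by simp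
    qed
    then show ?thesis using that unfolding S_def K_def by (auto simp: PiE_iff abs_le_iff)
  qed
  have "(\<Sum>i<d. (if i = 0 then 1 else 0::real)\<^sup>2) = 1"
    using d by (simp add: if_distrib[of "\<lambda>x. x\<^sup>2"] cong: if_cong)
  then have "S \<noteq> {}" using in_S[of "\<lambda>i. if i = 0 then 1 else 0"] d by auto
  from continuous_attains_inf[OF \<open>compact S\<close> this continuous_on_subset[OF Qc]]
  obtain x where x: "x \<in> S" "\<forall>y\<in>S. Q x \<le> Q y" by auto
  have "x i = 0" if "i \<ge> d" for i
  proof -
    have "x i \<in> (if i < d then {-1..1} else {0})" using x(1) unfolding S_def K_def by blast
    then show ?thesis using that by simp
  qed
  then show ?thesis using that x in_S unfolding S_def by blast
qed

lemma nonneg_quadratic_imp_linear_coeff_0: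
  fixes a b :: real
  assumes nonneg: "\<And>t. 0 \<le> 2 * t * a + t\<^sup>2 * b" and "0 \<le> a"
  shows "a = 0"
proof (rule ccontr)
  assume "a \<noteq> 0"
  with \<open>0 \<le> a\<close> have a: "0 < a" by simp
  define t where "t = - a / (\<bar>b\<bar> + 1)"
  have t: "t < 0" "- a < t * \<bar>b\<bar>"
    unfolding t_def using a by (auto simp: field_simps)
  have "2 * t * a + t\<^sup>2 * b \<le> t * (2 * a + t * \<bar>b\<bar>)"
    using mult_left_mono[OF abs_ge_self[of b], of "t\<^sup>2"] by (simp add: algebra_simps power2_eq_square)
  also have "\<dots> < 0" using t a by (intro mult_neg_pos) auto
  finally show False using nonneg[of t] by simp
qed

text \<open>A minimiser of \<open>\<parallel>N y\<parallel>\<^sup>2 / \<parallel>y\<parallel>\<^sup>2\<close> is an eigenvector of \<open>N\<^sup>T N\<close>: the derivative of the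
  quadratic \<open>t \<mapsto> \<parallel>N (x + t g)\<parallel>\<^sup>2 - \<lambda> \<parallel>x + t g\<parallel>\<^sup>2\<close> vanishes at \<open>t = 0\<close>, and for
  \<open>g = N\<^sup>T N x - \<lambda> x\<close> it equals \<open>2 \<parallel>g\<parallel>\<^sup>2\<close>.\<close>
lemma rayleigh_minimizer_eigenvector:
  fixes N :: "real mat"
  assumes N: "N \<in> carrier_mat d d"
    and min: "\<And>y. y \<in> carrier_vec d \<Longrightarrow> lam * (y \<bullet> y) \<le> (N *\<^sub>v y) \<bullet> (N *\<^sub>v y)"
    and x: "x \<in> carrier_vec d" and eq: "lam * (x \<bullet> x) = (N *\<^sub>v x) \<bullet> (N *\<^sub>v x)"
  shows "(transpose_mat N * N) *\<^sub>v x = lam \<cdot>\<^sub>v x"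
proof -
  define g where "g = (transpose_mat N * N) *\<^sub>v x - lam \<cdot>\<^sub>v x"
  have g: "g \<in> carrier_vec d" unfolding g_def using N x by auto
  have Nx: "N *\<^sub>v x \<in> carrier_vec d" and Ng: "N *\<^sub>v g \<in> carrier_vec d" using N x g by auto
  have cross: "(N *\<^sub>v x) \<bullet> (N *\<^sub>v g) - lam * (x \<bullet> g) = g \<bullet> g"
  proof -
    have "(N *\<^sub>v x) \<bullet> (N *\<^sub>v g) = ((transpose_mat N * N) *\<^sub>v x) \<bullet> g"
      using transpose_vec_mult_scalar[OF N g Nx] N x by simp
    then show ?thesis
      unfolding g_def using N x by (simp add: minus_scalar_prod_distrib[of _ d])
  qed
  have "0 \<le> 2 * t * (g \<bullet> g) + t\<^sup>2 * ((N *\<^sub>v g) \<bullet> (N *\<^sub>v g) - lam * (g \<bullet> g))" for t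
  proof -
    have "N *\<^sub>v (x + t \<cdot>\<^sub>v g) = N *\<^sub>v x + t \<cdot>\<^sub>v (N *\<^sub>v g)"
      using N x g by (simp add: mult_add_distrib_mat_vec mult_mat_vec)
    then have "lam * (x \<bullet> x + 2 * t * (x \<bullet> g) + t\<^sup>2 * (g \<bullet> g)) \<le>
        (N *\<^sub>v x) \<bullet> (N *\<^sub>v x) + 2 * t * ((N *\<^sub>v x) \<bullet> (N *\<^sub>v g)) + t\<^sup>2 * ((N *\<^sub>v g) \<bullet> (N *\<^sub>v g))"
      using min[of "x + t \<cdot>\<^sub>v g"] x g
      by (simp add: scalar_prod_add_smult_self[OF x g] scalar_prod_add_smult_self[OF Nx Ng])
    then show ?thesis using eq cross by (simp add: algebra_simps)
  qed
  from nonneg_quadratic_imp_linear_coeff_0[OF this scalar_prod_self_nonneg]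
  have "g = 0\<^sub>v d" using scalar_prod_self_pos[OF g] by force
  show ?thesis
  proof (rule eq_vecI)
    fix i assume i: "i < dim_vec (lam \<cdot>\<^sub>v x)"
    then have "g $ i = 0" using \<open>g = 0\<^sub>v d\<close> x by simp
    then show "((transpose_mat N * N) *\<^sub>v x) $ i = (lam \<cdot>\<^sub>v x) $ i"
      unfolding g_def using i x N by simp
  qed (use N x in simp)
qed

lemma rayleigh_quotient_attains_min:
  fixes N :: "real mat"
  assumes N: "N \<in> carrier_mat d d" and d: "d > 0"
  obtains x where "x \<in> carrier_vec d" "x \<bullet> x = 1"
    "\<And>y. y \<in> carrier_vec d \<Longrightarrow> ((N *\<^sub>v x) \<bullet> (N *\<^sub>v x)) * (y \<bullet> y) \<le> (N *\<^sub>v y) \<bullet> (N *\<^sub>v y)"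
proof -
  define Q where "Q f = (N *\<^sub>v vec d f) \<bullet> (N *\<^sub>v vec d f)" for f
  have Q_sum: "Q f = (\<Sum>i<d. (\<Sum>j<d. N $$ (i,j) * f j)\<^sup>2)" for f
    unfolding Q_def using N by (simp add: scalar_prod_self_eq_sum_squares[of _ d] scalar_prod_def lessThan_atLeast0 power2_eq_square)
  have "continuous_on UNIV Q" unfolding Q_sum
    by (intro continuous_on_sum continuous_on_power continuous_on_mult continuous_on_const
        continuous_on_product_coordinates)
  from continuous_attains_min_on_unit_sphere[OF this d]
  obtain f where f: "\<forall>i\<ge>d. f i = 0" "(\<Sum>i<d. (f i)\<^sup>2) = 1"
    and f_min: "\<And>y. \<forall>i\<ge>d. y i = 0 \<Longrightarrow> (\<Sum>i<d. (y i)\<^sup>2) = 1 \<Longrightarrow> Q f \<le> Q y" by blast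
  have min: "Q f * (y \<bullet> y) \<le> (N *\<^sub>v y) \<bullet> (N *\<^sub>v y)" if y: "y \<in> carrier_vec d" for y
  proof (cases "y = 0\<^sub>v d")
    case True
    then show ?thesis using scalar_prod_self_nonneg[of "N *\<^sub>v y"] by simp
  next
    case False
    define s where "s = sqrt (y \<bullet> y)"
    have s: "0 < s" "s\<^sup>2 = y \<bullet> y" unfolding s_def using scalar_prod_self_pos[OF y False] by auto
    have "(\<Sum>i<d. (y $ i / s)\<^sup>2) = 1"
      using s y scalar_prod_self_pos[OF y False]
      by (simp add: power_divide flip: sum_divide_distrib scalar_prod_self_eq_sum_squares)
    then have "Q f \<le> Q (\<lambda>i. if i < d then y $ i / s else 0)" by (intro f_min) auto
    also have "vec d (\<lambda>i. if i < d then y $ i / s else 0) = (1 / s) \<cdot>\<^sub>v y"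
      using y by (intro eq_vecI) auto
    then have "Q (\<lambda>i. if i < d then y $ i / s else 0) = (N *\<^sub>v y) \<bullet> (N *\<^sub>v y) / s\<^sup>2"
      unfolding Q_def using N y by (simp add: mult_mat_vec power2_eq_square)
    finally show ?thesis using s scalar_prod_self_pos[OF y False] by (simp add: field_simps)
  qed
  have "vec d f \<bullet> vec d f = 1" using f(2) by (simp add: scalar_prod_self_eq_sum_squares[of _ d])
  with min show ?thesis using that[of "vec d f"] unfolding Q_def by simp
qed

lemma rayleigh_quotient_lower_bound:
  fixes N :: "real mat"
  assumes N: "N \<in> carrier_mat d d"
    and mu_min: "\<And>lam. eigenvalue (transpose_mat N * N) lam \<Longrightarrow> mu \<le> lam"
    and y: "y \<in> carrier_vec d"
  shows "mu * (y \<bullet> y) \<le> (N *\<^sub>v y) \<bullet> (N *\<^sub>v y)"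
proof (cases "d = 0")
  case True
  then show ?thesis using y N by (simp add: scalar_prod_def)
next
  case False
  then obtain x where x: "x \<in> carrier_vec d" "x \<bullet> x = 1"
    and min: "\<And>y. y \<in> carrier_vec d \<Longrightarrow> ((N *\<^sub>v x) \<bullet> (N *\<^sub>v x)) * (y \<bullet> y) \<le> (N *\<^sub>v y) \<bullet> (N *\<^sub>v y)"
    using rayleigh_quotient_attains_min[OF N] by blast
  have "x \<noteq> 0\<^sub>v d" using x(2) by auto
  with rayleigh_minimizer_eigenvector[OF N min x(1)] x N
  have "eigenvalue (transpose_mat N * N) ((N *\<^sub>v x) \<bullet> (N *\<^sub>v x))"
    unfolding eigenvalue_def eigenvector_def by auto
  then have "mu * (y \<bullet> y) \<le> ((N *\<^sub>v x) \<bullet> (N *\<^sub>v x)) * (y \<bullet> y)"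
    using mu_min scalar_prod_self_nonneg by (intro mult_right_mono) auto
  with min[OF y] show ?thesis by linarith
qed

lemma gram_eigenvector_scalar_prod:
  fixes N :: "'a :: comm_ring_1 mat"
  assumes N: "N \<in> carrier_mat n d" and v: "eigenvector (transpose_mat N * N) v mu"
  shows "(N *\<^sub>v v) \<bullet> (N *\<^sub>v v) = mu * (v \<bullet> v)"
proof -
  have v: "v \<in> carrier_vec d" "(transpose_mat N * N) *\<^sub>v v = mu \<cdot>\<^sub>v v"
    using v N unfolding eigenvector_def by auto
  have "(N *\<^sub>v v) \<bullet> (N *\<^sub>v v) = (transpose_mat N *\<^sub>v (N *\<^sub>v v)) \<bullet> v"
    using transpose_vec_mult_scalar[OF N v(1), of "N *\<^sub>v v"] N v by simp
  also have "\<dots> = mu * (v \<bullet> v)" using N v by simp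
  finally show ?thesis .
qed

lemma unit_gram_eigenvector:
  fixes N :: "real mat"
  assumes N: "N \<in> carrier_mat d d" and mu: "eigenvalue (transpose_mat N * N) mu"
  obtains x where "x \<in> carrier_vec d" "x \<bullet> x = 1" "(N *\<^sub>v x) \<bullet> (N *\<^sub>v x) = mu"
proof -
  obtain v where v: "eigenvector (transpose_mat N * N) v mu"
    using mu unfolding eigenvalue_def by blast
  have vc: "v \<in> carrier_vec d" "v \<noteq> 0\<^sub>v d" using v N unfolding eigenvector_def by auto
  define s where "s = sqrt (v \<bullet> v)"
  have s: "0 < s" "s\<^sup>2 = v \<bullet> v" unfolding s_def using scalar_prod_self_pos[OF vc] by auto
  define x where "x = (1 / s) \<cdot>\<^sub>v v"
  have x: "x \<in> carrier_vec d" unfolding x_def using vc by simp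
  have xx: "x \<bullet> x = 1" unfolding x_def using vc s scalar_prod_self_pos[OF vc] by (simp add: power2_eq_square)
  have "(N *\<^sub>v x) \<bullet> (N *\<^sub>v x) = ((N *\<^sub>v v) \<bullet> (N *\<^sub>v v)) / s\<^sup>2"
    unfolding x_def mult_mat_vec[OF N vc(1)] using N vc by (simp add: power2_eq_square)
  also have "\<dots> = mu"
    using gram_eigenvector_scalar_prod[OF N v] s scalar_prod_self_pos[OF vc] by simp
  finally show ?thesis using that x xx by blast
qed

section \<open>Spectral radius\<close>

lemma eigenvalue_norm_le_real_spectral_radius:
  assumes A: "A \<in> carrier_mat d d" and ev: "eigenvalue (map_mat complex_of_real A) ev"
  shows "cmod ev \<le> real_spectral_radius A"
proof -
  have Ac: "map_mat complex_of_real A \<in> carrier_mat d d" using A by simp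
  have "0 < d" using eigenvalue_imp_nonzero_dim[OF Ac ev] by simp
  moreover have "cmod ev \<in> cmod ` spectrum (map_mat complex_of_real A)"
    using ev unfolding spectrum_def by blast
  ultimately show ?thesis
    using spectral_radius_mem_max(2)[OF Ac] unfolding real_spectral_radius_def by blast
qed

lemma real_eigenvalue_abs_le_real_spectral_radius:
  assumes A: "A \<in> carrier_mat d d" and ev: "eigenvalue A lam"
  shows "\<bar>lam\<bar> \<le> real_spectral_radius A"
proof -
  obtain v where v: "v \<in> carrier_vec d" "v \<noteq> 0\<^sub>v d" "A *\<^sub>v v = lam \<cdot>\<^sub>v v"
    using ev A unfolding eigenvalue_def eigenvector_def by auto
  have "map_mat complex_of_real A *\<^sub>v map_vec complex_of_real v = map_vec complex_of_real (A *\<^sub>v v)"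
    by (rule of_real_hom.mult_mat_vec_hom[OF A v(1), symmetric])
  also have "\<dots> = complex_of_real lam \<cdot>\<^sub>v map_vec complex_of_real v"
    unfolding v(3) by (rule of_real_hom.vec_hom_smult)
  finally have "map_mat complex_of_real A *\<^sub>v map_vec complex_of_real v = \<dots>" .
  with v A have "eigenvalue (map_mat complex_of_real A) (complex_of_real lam)"
    unfolding eigenvalue_def eigenvector_def by (intro exI[of _ "map_vec complex_of_real v"]) auto
  from eigenvalue_norm_le_real_spectral_radius[OF A this] show ?thesis by simp
qed

lemma real_spectral_radius_eigenvector:
  assumes A: "A \<in> carrier_mat d d" and d: "0 < d"
  obtains z ev where "eigenvector (map_mat complex_of_real A) z ev" "cmod ev = real_spectral_radius A"
proof -
  have "map_mat complex_of_real A \<in> carrier_mat d d" using A by simp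
  from spectral_radius_mem_max(1)[OF this d] show ?thesis
    using that unfolding real_spectral_radius_def spectrum_def eigenvalue_def by auto
qed

lemma real_spectral_radius_smult_le:
  fixes A :: "real mat"
  assumes A: "A \<in> carrier_mat d d" and d: "0 < d" and c: "0 < c"
  shows "real_spectral_radius (c \<cdot>\<^sub>m A) \<le> c * real_spectral_radius A"
proof -
  let ?Ac = "map_mat complex_of_real A"
  obtain w ev where w: "eigenvector (map_mat complex_of_real (c \<cdot>\<^sub>m A)) w ev"
    and ev: "cmod ev = real_spectral_radius (c \<cdot>\<^sub>m A)"
    using real_spectral_radius_eigenvector[of "c \<cdot>\<^sub>m A" d] A d by auto
  have "map_mat complex_of_real (c \<cdot>\<^sub>m A) = complex_of_real c \<cdot>\<^sub>m ?Ac" by (rule eq_matI) auto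
  with w A have w: "w \<in> carrier_vec d" "w \<noteq> 0\<^sub>v d" "complex_of_real c \<cdot>\<^sub>v (?Ac *\<^sub>v w) = ev \<cdot>\<^sub>v w"
    unfolding eigenvector_def by (auto simp: smult_mat_mult_vec[of _ d d])
  then have "(1 / complex_of_real c) \<cdot>\<^sub>v (complex_of_real c \<cdot>\<^sub>v (?Ac *\<^sub>v w)) =
      (1 / complex_of_real c) \<cdot>\<^sub>v (ev \<cdot>\<^sub>v w)" by simp
  then have "?Ac *\<^sub>v w = (ev / complex_of_real c) \<cdot>\<^sub>v w"
    using c by (simp add: smult_smult_assoc)
  with w A have "eigenvalue ?Ac (ev / complex_of_real c)"
    unfolding eigenvalue_def eigenvector_def by auto
  from eigenvalue_norm_le_real_spectral_radius[OF A this]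
  show ?thesis using c ev by (simp add: norm_divide field_simps)
qed

lemma powers_bounded_if_real_spectral_radius_less_1:
  assumes A: "A \<in> carrier_mat d d" and "real_spectral_radius A < 1"
  obtains K where "\<And>k i j. i < d \<Longrightarrow> j < d \<Longrightarrow> \<bar>(A ^\<^sub>m k) $$ (i,j)\<bar> \<le> K"
proof -
  have "map_mat complex_of_real A \<in> carrier_mat d d" using A by simp
  from spectral_radius_jnf_norm_bound_less_1_upper_triangular[OF this] assms(2)
  obtain K where K: "\<And>k. norm_bound (map_mat complex_of_real A ^\<^sub>m k) K"
    unfolding real_spectral_radius_def by auto
  have "\<bar>(A ^\<^sub>m k) $$ (i,j)\<bar> \<le> K" if "i < d" "j < d" for k i j
    using K[of k] that A unfolding norm_bound_def of_real_hom.mat_hom_pow[OF A, symmetric] by force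
  then show ?thesis using that by blast
qed

section \<open>Non-negative matrices\<close>

lemma nonneg_mat_mult_vec_mono:
  fixes P :: "real mat"
  assumes P: "P \<in> carrier_mat n d" "nonneg_mat P"
    and x: "x \<in> carrier_vec d" and y: "y \<in> carrier_vec d" and "x \<le> y"
  shows "P *\<^sub>v x \<le> P *\<^sub>v y"
proof -
  have "(P *\<^sub>v x) $ i \<le> (P *\<^sub>v y) $ i" if i: "i < n" for i
    unfolding mult_mat_vec_index_sum[OF P(1) x i] mult_mat_vec_index_sum[OF P(1) y i]
    using assms i by (intro sum_mono mult_left_mono) (auto simp: less_eq_vec_def nonneg_matD)
  then show ?thesis using P x y by (simp add: less_eq_vec_def)
qed

lemma nonneg_mat_pow:
  fixes P :: "real mat"
  assumes P: "P \<in> carrier_mat d d" "nonneg_mat P"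
  shows "nonneg_mat (P ^\<^sub>m k)"
proof (induction k)
  case 0
  then show ?case by (simp add: nonneg_mat_def)
next
  case (Suc k)
  have "0 \<le> (P ^\<^sub>m k * P) $$ (i,j)" if "i < d" "j < d" for i j
    using Suc P that by (auto simp: scalar_prod_def nonneg_mat_def intro!: sum_nonneg)
  then show ?case using P by (simp add: nonneg_mat_def)
qed

lemma nonneg_mat_pow_mult_vec_ge:
  fixes B :: "real mat"
  assumes B: "B \<in> carrier_mat d d" "nonneg_mat B" and m: "m \<in> carrier_vec d"
    and c: "0 \<le> c" and sub: "c \<cdot>\<^sub>v m \<le> B *\<^sub>v m"
  shows "c ^ k \<cdot>\<^sub>v m \<le> (B ^\<^sub>m k) *\<^sub>v m"
proof (induction k)
  case 0
  then show ?case using B m by simp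
next
  case (Suc k)
  have Bk: "B ^\<^sub>m k \<in> carrier_mat d d" "nonneg_mat (B ^\<^sub>m k)"
    using B by (auto intro: nonneg_mat_pow)
  have "c ^ Suc k \<cdot>\<^sub>v m = c \<cdot>\<^sub>v (c ^ k \<cdot>\<^sub>v m)" by (simp add: smult_smult_assoc)
  also have "\<dots> \<le> c \<cdot>\<^sub>v ((B ^\<^sub>m k) *\<^sub>v m)" using Suc c by (rule smult_vec_mono[rotated])
  also have "\<dots> = (B ^\<^sub>m k) *\<^sub>v (c \<cdot>\<^sub>v m)" using Bk m by (simp add: mult_mat_vec)
  also have "\<dots> \<le> (B ^\<^sub>m k) *\<^sub>v (B *\<^sub>v m)"
    using Bk m B sub by (intro nonneg_mat_mult_vec_mono) auto
  also have "\<dots> = (B ^\<^sub>m Suc k) *\<^sub>v m" using assoc_mult_mat_vec[OF Bk(1) B(1) m] by simp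
  finally show ?case .
qed

section \<open>Frobenius norm and rank-one matrices\<close>

lemma frob_norm_nonneg: "0 \<le> frob_norm P"
  by (simp add: frob_norm_def sum_nonneg)

lemma cmod_of_real_mat_mult_vec_le:
  fixes P :: "real mat" and z :: "complex vec"
  assumes P: "P \<in> carrier_mat n d" and z: "z \<in> carrier_vec d" and i: "i < n"
  shows "cmod ((map_mat complex_of_real P *\<^sub>v z) $ i) \<le> (\<Sum>j<d. \<bar>P $$ (i,j)\<bar> * cmod (z $ j))"
proof -
  have "(map_mat complex_of_real P *\<^sub>v z) $ i = (\<Sum>j<d. complex_of_real (P $$ (i,j)) * z $ j)"
    using P z i by (simp add: scalar_prod_def lessThan_atLeast0)
  then have "cmod ((map_mat complex_of_real P *\<^sub>v z) $ i) \<le> (\<Sum>j<d. cmod (complex_of_real (P $$ (i,j)) * z $ j))"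
    by (simp add: norm_sum)
  then show ?thesis by (simp add: norm_mult)
qed

lemma cmod_of_real_mat_mult_vec_sum_squares_le:
  fixes P :: "real mat" and z :: "complex vec"
  assumes P: "P \<in> carrier_mat n d" and z: "z \<in> carrier_vec d"
  shows "(\<Sum>i<n. (cmod ((map_mat complex_of_real P *\<^sub>v z) $ i))\<^sup>2)
    \<le> (frob_norm P)\<^sup>2 * (\<Sum>j<d. (cmod (z $ j))\<^sup>2)"
proof -
  have "(cmod ((map_mat complex_of_real P *\<^sub>v z) $ i))\<^sup>2
      \<le> (\<Sum>j<d. (P $$ (i,j))\<^sup>2) * (\<Sum>j<d. (cmod (z $ j))\<^sup>2)" if i: "i < n" for i
  proof -
    have "(cmod ((map_mat complex_of_real P *\<^sub>v z) $ i))\<^sup>2 \<le> (\<Sum>j<d. \<bar>P $$ (i,j)\<bar> * cmod (z $ j))\<^sup>2"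
      using cmod_of_real_mat_mult_vec_le[OF P z i] by (rule power_mono) simp
    also have "\<dots> \<le> (\<Sum>j<d. \<bar>P $$ (i,j)\<bar>\<^sup>2) * (\<Sum>j<d. (cmod (z $ j))\<^sup>2)"
      by (rule Cauchy_Schwarz_ineq_sum)
    finally show ?thesis by simp
  qed
  then have "(\<Sum>i<n. (cmod ((map_mat complex_of_real P *\<^sub>v z) $ i))\<^sup>2)
      \<le> (\<Sum>i<n. (\<Sum>j<d. (P $$ (i,j))\<^sup>2) * (\<Sum>j<d. (cmod (z $ j))\<^sup>2))"
    by (intro sum_mono) auto
  also have "\<dots> = (frob_norm P)\<^sup>2 * (\<Sum>j<d. (cmod (z $ j))\<^sup>2)"
    using P by (simp add: frob_norm_def sum_nonneg sum_distrib_right)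
  finally show ?thesis .
qed

lemma outer_prod_carrier: "u \<in> carrier_vec n \<Longrightarrow> v \<in> carrier_vec m \<Longrightarrow> outer_prod u v \<in> carrier_mat n m"
  by (simp add: outer_prod_def)

lemma smult_outer_prod_inverse_smult:
  "r \<noteq> 0 \<Longrightarrow> r \<cdot>\<^sub>m outer_prod ((1 / r) \<cdot>\<^sub>v u) v = outer_prod u v"
  by (intro eq_matI) (auto simp: outer_prod_def)

lemma outer_prod_mult_vec:
  assumes "u \<in> carrier_vec n" "v \<in> carrier_vec m" "w \<in> carrier_vec m"
  shows "outer_prod u v *\<^sub>v w = (v \<bullet> w) \<cdot>\<^sub>v u"
  using assms by (intro eq_vecI) (auto simp: outer_prod_def scalar_prod_def sum_distrib_left ac_simps)

lemma frob_norm_outer_prod: "frob_norm (outer_prod u v) = vec_norm u * vec_norm v"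
proof -
  have "(\<Sum>i<dim_vec u. \<Sum>j<dim_vec v. (u $ i * v $ j)\<^sup>2) = (\<Sum>i<dim_vec u. (u $ i)\<^sup>2) * (\<Sum>j<dim_vec v. (v $ j)\<^sup>2)"
    by (simp add: power_mult_distrib sum_product)
  then show ?thesis
    by (simp add: frob_norm_def vec_norm_def outer_prod_def real_sqrt_mult)
qed

lemma nonneg_mat_add_outer_prod:
  assumes "P \<in> carrier_mat n m" "nonneg_mat P" "u \<in> carrier_vec n" "nonneg_vec u"
    "v \<in> carrier_vec m" "nonneg_vec v"
  shows "nonneg_mat (P + outer_prod u v)"
  using assms by (auto simp: nonneg_mat_def nonneg_vec_def outer_prod_def)

section \<open>The M-matrix \<open>I - A\<close>\<close>

locale subcritical_nonneg_mat =
  fixes A :: "real mat" and d :: nat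
  assumes A_carrier: "A \<in> carrier_mat d d"
    and A_nonneg: "nonneg_mat A"
    and A_spectral_radius: "real_spectral_radius A < 1"
begin

abbreviation N :: "real mat" where "N \<equiv> 1\<^sub>m d - A"

lemma A_dims: "dim_row A = d" "dim_col A = d"
  using A_carrier by auto

lemma N_carrier: "N \<in> carrier_mat d d"
  using A_carrier by auto

lemma N_mult_vec: "v \<in> carrier_vec d \<Longrightarrow> N *\<^sub>v v = v - A *\<^sub>v v"
  using minus_mult_distrib_mat_vec[OF one_carrier_mat A_carrier] by simp

text \<open>Pick \<open>c > 1\<close> with \<open>\<rho>(c A) < 1\<close>: the powers of \<open>c A\<close> stay bounded, whereas
  \<open>c\<^sup>k m \<le> (c A)\<^sup>k m\<close> grows geometrically.\<close>
lemma subinvariant_nonneg_vec_eq_0: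
  assumes m: "m \<in> carrier_vec d" "0\<^sub>v d \<le> m" "m \<le> A *\<^sub>v m"
  shows "m = 0\<^sub>v d"
proof (rule ccontr)
  assume "m \<noteq> 0\<^sub>v d"
  then obtain i where i: "i < d" "m $ i \<noteq> 0"
    using m(1) by (metis eq_vecI carrier_vecD index_zero_vec)
  with m(2) have mi: "0 < m $ i" by (force simp: less_eq_vec_def)
  define r where "r = max 0 (real_spectral_radius A)"
  have r: "0 \<le> r" "r < 1" "real_spectral_radius A \<le> r"
    using A_spectral_radius by (auto simp: r_def)
  define c where "c = 2 / (1 + r)"
  have c: "1 < c" "c * real_spectral_radius A < 1"
  proof -
    show "1 < c" using r by (simp add: c_def field_simps)
    have "c * real_spectral_radius A \<le> c * r" using r \<open>1 < c\<close> by (intro mult_left_mono) auto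
    also have "c * r < 1" using r by (simp add: c_def field_simps)
    finally show "c * real_spectral_radius A < 1" .
  qed
  define B where "B = c \<cdot>\<^sub>m A"
  have B: "B \<in> carrier_mat d d" "nonneg_mat B"
    unfolding B_def using A_carrier A_nonneg c by (auto simp: nonneg_mat_def)
  have "real_spectral_radius B < 1"
    unfolding B_def using real_spectral_radius_smult_le[OF A_carrier, of c] i c by linarith
  then obtain K where K: "\<And>k i j. i < d \<Longrightarrow> j < d \<Longrightarrow> \<bar>(B ^\<^sub>m k) $$ (i,j)\<bar> \<le> K"
    using powers_bounded_if_real_spectral_radius_less_1[OF B(1)] by blast
  have "c \<cdot>\<^sub>v m \<le> B *\<^sub>v m"
    unfolding B_def smult_mat_mult_vec[OF A_carrier m(1)] using m c by (intro smult_vec_mono) auto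
  from nonneg_mat_pow_mult_vec_ge[OF B m(1) _ this] c
  have grow: "c ^ k \<cdot>\<^sub>v m \<le> (B ^\<^sub>m k) *\<^sub>v m" for k by simp
  have bound: "c ^ k * m $ i \<le> K * (\<Sum>j<d. m $ j)" for k
  proof -
    have Bk: "B ^\<^sub>m k \<in> carrier_mat d d" using B(1) by simp
    have "c ^ k * m $ i \<le> ((B ^\<^sub>m k) *\<^sub>v m) $ i"
      using grow[of k] i m by (auto simp: less_eq_vec_def)
    also have "\<dots> = (\<Sum>j<d. (B ^\<^sub>m k) $$ (i,j) * m $ j)"
      by (rule mult_mat_vec_index_sum[OF Bk m(1) i(1)])
    also have "\<dots> \<le> (\<Sum>j<d. K * m $ j)"
      using K i m by (intro sum_mono mult_right_mono) (auto simp: less_eq_vec_def dest: abs_le_D1)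
    finally show ?thesis by (simp add: sum_distrib_left)
  qed
  obtain k where "K * (\<Sum>j<d. m $ j) / m $ i < c ^ k"
    using real_arch_pow[OF c(1)] by blast
  then have "K * (\<Sum>j<d. m $ j) < c ^ k * m $ i" using mi by (simp add: divide_less_eq)
  with bound[of k] show False by linarith
qed

lemma N_inverse_nonneg:
  assumes p: "p \<in> carrier_vec d" and Np: "0\<^sub>v d \<le> N *\<^sub>v p"
  shows "0\<^sub>v d \<le> p"
proof -
  define m where "m = vec d (\<lambda>i. max 0 (- p $ i))"
  have m: "m \<in> carrier_vec d" "0\<^sub>v d \<le> m" "- p \<le> m"
    unfolding m_def using p by (auto simp: less_eq_vec_def)
  have Ap: "A *\<^sub>v p \<in> carrier_vec d" and Am: "A *\<^sub>v m \<in> carrier_vec d"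
    using A_carrier p m by auto
  have Am_nonneg: "0\<^sub>v d \<le> A *\<^sub>v m"
    using nonneg_mat_mult_vec_mono[OF A_carrier A_nonneg zero_carrier_vec m(1,2)]
    by (simp add: mult_mat_vec_zero[OF A_carrier])
  have "m $ i \<le> (A *\<^sub>v m) $ i" if i: "i < d" for i
  proof (cases "0 \<le> p $ i")
    case True
    then have "m $ i = 0" using i by (simp add: m_def)
    moreover have "0 \<le> (A *\<^sub>v m) $ i"
      using Am_nonneg i unfolding less_eq_vec_iff[OF zero_carrier_vec Am] by simp
    ultimately show ?thesis by simp
  next
    case False
    then have "m $ i = - p $ i" using i by (simp add: m_def)
    also have "\<dots> \<le> - (A *\<^sub>v p) $ i"
      using Np i N_mult_vec[OF p] p by (simp add: less_eq_vec_def A_dims)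
    also have "\<dots> = (A *\<^sub>v (- p)) $ i"
      using mult_mat_vec_uminus[OF A_carrier p] i by (simp add: A_dims)
    also have "\<dots> \<le> (A *\<^sub>v m) $ i"
      using nonneg_mat_mult_vec_mono[OF A_carrier A_nonneg _ m(1,3)] p i by (simp add: less_eq_vec_def A_dims)
    finally show ?thesis .
  qed
  then have "m \<le> A *\<^sub>v m" using m(1) Am by (simp add: less_eq_vec_iff)
  with m have "m = 0\<^sub>v d" by (intro subinvariant_nonneg_vec_eq_0)
  have "0 \<le> p $ i" if "i < d" for i
  proof -
    have "max 0 (- p $ i) = 0"
      using \<open>m = 0\<^sub>v d\<close> that unfolding m_def by (metis index_vec index_zero_vec(1))
    then show ?thesis by (simp add: max_def split: if_splits)
  qed
  then show ?thesis using p by (simp add: less_eq_vec_iff[OF zero_carrier_vec p])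
qed

lemma N_mult_vec_reflects_le:
  assumes p: "p \<in> carrier_vec d" and q: "q \<in> carrier_vec d" and le: "N *\<^sub>v p \<le> N *\<^sub>v q"
  shows "p \<le> q"
proof -
  have Np: "N *\<^sub>v p \<in> carrier_vec d" and Nq: "N *\<^sub>v q \<in> carrier_vec d"
    using N_carrier p q by auto
  with le have "0\<^sub>v d \<le> N *\<^sub>v q - N *\<^sub>v p"
    by (simp add: less_eq_vec_def A_dims)
  also have "N *\<^sub>v q - N *\<^sub>v p = N *\<^sub>v (q - p)"
    by (rule mult_minus_distrib_mat_vec[OF N_carrier q p, symmetric])
  finally have "0\<^sub>v d \<le> N *\<^sub>v (q - p)" .
  then have "0\<^sub>v d \<le> q - p" by (rule N_inverse_nonneg[rotated]) (use p q in simp)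
  then show ?thesis using p q
    by (simp add: less_eq_vec_iff[OF zero_carrier_vec minus_carrier_vec[OF q p]]
        less_eq_vec_iff[OF p q] carrier_vecD[OF p])
qed

lemma N_surj:
  assumes b: "b \<in> carrier_vec d"
  obtains q where "q \<in> carrier_vec d" "N *\<^sub>v q = b"
proof -
  have "det N \<noteq> 0"
  proof
    assume "det N = 0"
    then obtain v where v: "v \<in> carrier_vec d" "v \<noteq> 0\<^sub>v d" "N *\<^sub>v v = 0\<^sub>v d"
      using det_0_iff_vec_prod_zero[OF N_carrier] by auto
    note N0 = mult_mat_vec_zero[OF N_carrier]
    have "v \<le> 0\<^sub>v d" by (rule N_mult_vec_reflects_le) (use v N0 in simp_all)
    moreover have "0\<^sub>v d \<le> v" by (rule N_mult_vec_reflects_le) (use v N0 in simp_all)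
    ultimately show False using v(2) by simp
  qed
  from det_non_zero_imp_unit[OF N_carrier this, of undefined]
  obtain Ni where Ni: "Ni \<in> carrier_mat d d" "N * Ni = 1\<^sub>m d"
    unfolding Units_def ring_mat_def by auto
  with b show ?thesis using that[of "Ni *\<^sub>v b"] assoc_mult_mat_vec[OF N_carrier Ni(1) b] by simp
qed

lemma N_abs_eigenvector_le:
  assumes Y: "Y \<in> carrier_mat d d"
    and z: "eigenvector (map_mat complex_of_real Y) z ev" and ev: "1 \<le> cmod ev"
  shows "N *\<^sub>v map_vec cmod z \<le> map_vec cmod (map_mat complex_of_real (Y - A) *\<^sub>v z)"
proof -
  let ?Ac = "map_mat complex_of_real A" and ?Dc = "map_mat complex_of_real (Y - A)"
  have zc: "z \<in> carrier_vec d" and Yz: "map_mat complex_of_real Y *\<^sub>v z = ev \<cdot>\<^sub>v z"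
    using z Y unfolding eigenvector_def by auto
  have "map_mat complex_of_real Y = ?Ac + ?Dc"
    using Y A_carrier by (intro eq_matI) auto
  with Yz have "ev \<cdot>\<^sub>v z = (?Ac + ?Dc) *\<^sub>v z" by simp
  also have "\<dots> = ?Ac *\<^sub>v z + ?Dc *\<^sub>v z"
    by (rule add_mult_distrib_mat_vec[of _ d d]) (use zc Y A_carrier in auto)
  finally have split: "ev \<cdot>\<^sub>v z = ?Ac *\<^sub>v z + ?Dc *\<^sub>v z" .
  have "cmod (z $ i) - (A *\<^sub>v map_vec cmod z) $ i \<le> cmod ((?Dc *\<^sub>v z) $ i)" if i: "i < d" for i
  proof -
    have eq_i: "ev * z $ i = (?Ac *\<^sub>v z) $ i + (?Dc *\<^sub>v z) $ i"
      using arg_cong[OF split, of "\<lambda>w. w $ i"] i zc A_carrier by simp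
    have "cmod (z $ i) \<le> cmod ev * cmod (z $ i)"
      using mult_right_mono[OF ev norm_ge_zero] by simp
    also have "\<dots> = cmod ((?Ac *\<^sub>v z) $ i + (?Dc *\<^sub>v z) $ i)"
      by (simp add: norm_mult flip: eq_i)
    also have "\<dots> \<le> cmod ((?Ac *\<^sub>v z) $ i) + cmod ((?Dc *\<^sub>v z) $ i)"
      by (rule norm_triangle_ineq)
    also have "cmod ((?Ac *\<^sub>v z) $ i) \<le> (\<Sum>j<d. \<bar>A $$ (i,j)\<bar> * cmod (z $ j))"
      by (rule cmod_of_real_mat_mult_vec_le[OF A_carrier zc i])
    also have "(\<Sum>j<d. \<bar>A $$ (i,j)\<bar> * cmod (z $ j)) = (A *\<^sub>v map_vec cmod z) $ i"
      using A_nonneg A_carrier i zc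
      by (subst mult_mat_vec_index_sum[OF A_carrier _ i]) (auto intro!: sum.cong simp: nonneg_matD)
    finally show ?thesis by simp
  qed
  moreover have "N *\<^sub>v map_vec cmod z = map_vec cmod z - A *\<^sub>v map_vec cmod z"
    by (rule N_mult_vec) (use zc in simp)
  ultimately show ?thesis using zc by (simp add: less_eq_vec_def A_dims)
qed

lemma frob_norm_diff_ge_if_spectral_radius_ge_1:
  assumes mu_min: "\<And>lam. eigenvalue (transpose_mat N * N) lam \<Longrightarrow> mu \<le> lam"
    and mu: "0 \<le> mu" and d: "0 < d"
    and Y: "Y \<in> carrier_mat d d" "1 \<le> real_spectral_radius Y"
  shows "sqrt mu \<le> frob_norm (Y - A)"
proof -
  obtain z ev where z: "eigenvector (map_mat complex_of_real Y) z ev"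
    and ev: "cmod ev = real_spectral_radius Y"
    using real_spectral_radius_eigenvector[OF Y(1) d] by blast
  have zc: "z \<in> carrier_vec d" "z \<noteq> 0\<^sub>v d" using z Y unfolding eigenvector_def by auto
  define a where "a = map_vec cmod z"
  define b where "b = map_vec cmod (map_mat complex_of_real (Y - A) *\<^sub>v z)"
  have YA: "Y - A \<in> carrier_mat d d" using A_carrier by (rule minus_carrier_mat)
  then have a: "a \<in> carrier_vec d" and b: "b \<in> carrier_vec d"
    using zc unfolding a_def b_def by auto
  have "a \<noteq> 0\<^sub>v d"
  proof -
    obtain i where i: "i < d" "z $ i \<noteq> 0" using zc by (metis eq_vecI carrier_vecD index_zero_vec)
    then have "a $ i \<noteq> 0" by (simp add: a_def carrier_vecD[OF zc(1)])
    with i show ?thesis by auto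
  qed
  obtain q where q: "q \<in> carrier_vec d" "N *\<^sub>v q = b" using N_surj[OF b] by blast
  have "N *\<^sub>v a \<le> N *\<^sub>v q"
    unfolding q(2) a_def b_def using N_abs_eigenvector_le[OF Y(1) z] ev Y(2) by simp
  then have "a \<le> q" by (rule N_mult_vec_reflects_le[OF a q(1)])
  then have "mu * (a \<bullet> a) \<le> mu * (q \<bullet> q)"
    using a q(1) mu by (intro mult_left_mono scalar_prod_self_mono) (auto simp: less_eq_vec_def a_def)
  also have "\<dots> \<le> b \<bullet> b" using rayleigh_quotient_lower_bound[OF N_carrier mu_min q(1)] q(2) by simp
  also have "\<dots> \<le> (frob_norm (Y - A))\<^sup>2 * (a \<bullet> a)"
  proof -
    have "dim_vec (map_mat complex_of_real (Y - A) *\<^sub>v z) = d" by (simp add: A_dims)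
    then have "b \<bullet> b = (\<Sum>i<d. (cmod ((map_mat complex_of_real (Y - A) *\<^sub>v z) $ i))\<^sup>2)"
      unfolding scalar_prod_self_eq_sum_squares[OF b] by (intro sum.cong) (auto simp: b_def)
    moreover have "a \<bullet> a = (\<Sum>j<d. (cmod (z $ j))\<^sup>2)"
      unfolding scalar_prod_self_eq_sum_squares[OF a] using zc(1) by (intro sum.cong) (auto simp: a_def)
    ultimately show ?thesis using cmod_of_real_mat_mult_vec_sum_squares_le[OF YA zc(1)] by simp
  qed
  finally have "mu \<le> (frob_norm (Y - A))\<^sup>2" using scalar_prod_self_pos[OF a \<open>a \<noteq> 0\<^sub>v d\<close>] by simp
  then show ?thesis using frob_norm_nonneg real_le_lsqrt by blast
qed

lemma N_mult_vec_neq_0: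
  assumes v: "v \<in> carrier_vec d" "v \<noteq> 0\<^sub>v d"
  shows "N *\<^sub>v v \<noteq> 0\<^sub>v d"
proof
  assume Nv: "N *\<^sub>v v = 0\<^sub>v d"
  have "A *\<^sub>v v = 1 \<cdot>\<^sub>v v"
  proof (rule eq_vecI)
    fix i assume "i < dim_vec (1 \<cdot>\<^sub>v v)"
    then have i: "i < d" using v by simp
    have "(N *\<^sub>v v) $ i = 0" using Nv i by simp
    then show "(A *\<^sub>v v) $ i = (1 \<cdot>\<^sub>v v) $ i" using N_mult_vec[OF v(1)] i v by (simp add: A_dims)
  qed (use v in \<open>simp add: A_dims\<close>)
  then have "eigenvalue A 1" using v A_carrier unfolding eigenvalue_def eigenvector_def by auto
  from real_eigenvalue_abs_le_real_spectral_radius[OF A_carrier this] A_spectral_radius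
  show False by simp
qed

lemma gram_eigenvalue_pos:
  assumes "eigenvalue (transpose_mat N * N) mu"
  shows "0 < mu"
proof -
  obtain v where v: "eigenvector (transpose_mat N * N) v mu"
    using assms unfolding eigenvalue_def by blast
  have vc: "v \<in> carrier_vec d" "v \<noteq> 0\<^sub>v d" using v N_carrier unfolding eigenvector_def by auto
  have "0 < (N *\<^sub>v v) \<bullet> (N *\<^sub>v v)"
    using scalar_prod_self_pos[of "N *\<^sub>v v" d] N_mult_vec_neq_0[OF vc] N_carrier vc by auto
  also have "\<dots> = mu * (v \<bullet> v)" by (rule gram_eigenvector_scalar_prod[OF N_carrier v])
  finally show ?thesis using scalar_prod_self_pos[OF vc] by (simp add: zero_less_mult_iff)
qed

lemma N_preimage_of_abs_dominates:
  assumes x: "x \<in> carrier_vec d"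
  obtains v where "v \<in> carrier_vec d" "N *\<^sub>v v = map_vec abs (N *\<^sub>v x)"
    "\<And>i. i < d \<Longrightarrow> \<bar>x $ i\<bar> \<le> v $ i"
proof -
  have Nx: "N *\<^sub>v x \<in> carrier_vec d" using N_carrier x by simp
  then obtain v where v: "v \<in> carrier_vec d" "N *\<^sub>v v = map_vec abs (N *\<^sub>v x)"
    using N_surj[of "map_vec abs (N *\<^sub>v x)"] by auto
  have "x \<le> v"
    by (rule N_mult_vec_reflects_le[OF x v(1)]) (use Nx v in \<open>simp add: less_eq_vec_def A_dims abs_ge_self\<close>)
  moreover have "- x \<le> v"
    by (rule N_mult_vec_reflects_le)
      (use x v Nx in \<open>simp_all add: mult_mat_vec_uminus[OF N_carrier] less_eq_vec_def A_dims abs_ge_minus_self\<close>)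
  ultimately have "\<bar>x $ i\<bar> \<le> v $ i" if "i < d" for i
    using that x v by (simp add: less_eq_vec_def abs_le_iff)
  with v show ?thesis using that by blast
qed

lemma nonneg_gram_eigenvector:
  assumes mu_eig: "eigenvalue (transpose_mat N * N) mu"
    and mu_min: "\<And>lam. eigenvalue (transpose_mat N * N) lam \<Longrightarrow> mu \<le> lam"
  obtains v where "v \<in> carrier_vec d" "0\<^sub>v d \<le> v" "v \<bullet> v = 1" "0\<^sub>v d \<le> N *\<^sub>v v"
    "(N *\<^sub>v v) \<bullet> (N *\<^sub>v v) = mu" "eigenvector (transpose_mat N * N) v mu"
proof -
  obtain x where x: "x \<in> carrier_vec d" "x \<bullet> x = 1" "(N *\<^sub>v x) \<bullet> (N *\<^sub>v x) = mu"
    using unit_gram_eigenvector[OF N_carrier mu_eig] by blast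
  obtain v where v: "v \<in> carrier_vec d" "N *\<^sub>v v = map_vec abs (N *\<^sub>v x)"
    and dom: "\<And>i. i < d \<Longrightarrow> \<bar>x $ i\<bar> \<le> v $ i"
    using N_preimage_of_abs_dominates[OF x(1)] by blast
  have nonneg: "0\<^sub>v d \<le> v" "0\<^sub>v d \<le> N *\<^sub>v v"
    using v dom N_carrier x(1) by (auto simp: less_eq_vec_def intro: order_trans[OF abs_ge_zero])
  have Nv: "(N *\<^sub>v v) \<bullet> (N *\<^sub>v v) = mu"
    using x(3) v(2) by (simp add: scalar_prod_def abs_mult_self)
  have "1 \<le> v \<bullet> v" using scalar_prod_self_mono[OF x(1) v(1) dom] x(2) by simp
  moreover have "mu * (v \<bullet> v) \<le> mu"
    using rayleigh_quotient_lower_bound[OF N_carrier mu_min v(1)] Nv by simp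
  ultimately have vv: "v \<bullet> v = 1" using gram_eigenvalue_pos[OF mu_eig] by (simp add: mult_le_cancel_left1)
  have "(transpose_mat N * N) *\<^sub>v v = mu \<cdot>\<^sub>v v"
    by (rule rayleigh_minimizer_eigenvector[OF N_carrier _ v(1)])
      (use rayleigh_quotient_lower_bound[OF N_carrier mu_min] vv Nv in auto)
  moreover have "v \<noteq> 0\<^sub>v d" using vv by auto
  ultimately have "eigenvector (transpose_mat N * N) v mu"
    using v(1) N_carrier unfolding eigenvector_def by auto
  with v(1) nonneg vv Nv show ?thesis using that by blast
qed

lemma rank_one_correction_fixes_vec:
  assumes v: "v \<in> carrier_vec d" "v \<bullet> v = 1"
  shows "(A + outer_prod (N *\<^sub>v v) v) *\<^sub>v v = v"
proof -
  have Nv: "N *\<^sub>v v \<in> carrier_vec d" using N_carrier v(1) by simp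
  have "(A + outer_prod (N *\<^sub>v v) v) *\<^sub>v v = A *\<^sub>v v + N *\<^sub>v v"
    using A_carrier v Nv
    by (simp add: add_mult_distrib_mat_vec[of _ d d] outer_prod_carrier outer_prod_mult_vec)
  also have "\<dots> = v"
    unfolding N_mult_vec[OF v(1)] using v(1) by (intro eq_vecI) (auto simp: A_dims)
  finally show ?thesis .
qed

end

theorem theorem1:
  fixes A :: "real mat" and d :: nat and mu :: real
  assumes A: "A \<in> carrier_mat d d"
    and nonneg: "nonneg_mat A"
    and rho: "real_spectral_radius A < 1"
    and mu_eig: "eigenvalue ((1\<^sub>m d - A\<^sup>T) * (1\<^sub>m d - A)) mu"
    and mu_min: "\<And>lam. eigenvalue ((1\<^sub>m d - A\<^sup>T) * (1\<^sub>m d - A)) lam \<Longrightarrow> mu \<le> lam"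
  shows "mu > 0 \<and>
    (\<exists>v. eigenvector ((1\<^sub>m d - A\<^sup>T) * (1\<^sub>m d - A)) v mu \<and> nonneg_vec v \<and> vec_norm v = 1 \<and>
      (let r = sqrt mu;
           u = (1 / r) \<cdot>\<^sub>v ((1\<^sub>m d - A) *\<^sub>v v);
           X = A + r \<cdot>\<^sub>m outer_prod u v
       in nonneg_vec u \<and> nonneg_mat X \<and> real_spectral_radius X \<ge> 1 \<and>
          frob_norm (X - A) = r \<and>
          (\<forall>Y \<in> carrier_mat d d. real_spectral_radius Y \<ge> 1 \<longrightarrow> frob_norm (Y - A) \<ge> r)))"
proof -
  interpret subcritical_nonneg_mat A d using A nonneg rho by unfold_locales
  have gram: "(1\<^sub>m d - A\<^sup>T) * (1\<^sub>m d - A) = transpose_mat N * N"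
    using A by (simp add: transpose_minus[of "1\<^sub>m d" d d A])
  note mu_eig = mu_eig[unfolded gram] and mu_min = mu_min[unfolded gram]
  have mu: "0 < mu" by (rule gram_eigenvalue_pos[OF mu_eig])
  obtain v where v: "v \<in> carrier_vec d" "0\<^sub>v d \<le> v" "v \<bullet> v = 1" "0\<^sub>v d \<le> N *\<^sub>v v"
      "(N *\<^sub>v v) \<bullet> (N *\<^sub>v v) = mu" "eigenvector (transpose_mat N * N) v mu"
    by (rule nonneg_gram_eigenvector[OF mu_eig mu_min])
  have d: "0 < d" using v(1,3) by (cases d) (auto simp: scalar_prod_def)
  have Nv: "N *\<^sub>v v \<in> carrier_vec d" using N_carrier v(1) by simp
  define X where "X = A + outer_prod (N *\<^sub>v v) v"
  have X: "X \<in> carrier_mat d d" unfolding X_def using A Nv v(1) by (simp add: outer_prod_carrier)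
  have "eigenvalue X 1"
    using rank_one_correction_fixes_vec[OF v(1,3)] v(1,3) X
    unfolding eigenvalue_def eigenvector_def X_def by (intro exI[of _ v]) auto
  have "X - A = outer_prod (N *\<^sub>v v) v"
    unfolding X_def using A Nv v(1) by (intro eq_matI) (auto simp: outer_prod_def)
  then have "frob_norm (X - A) = sqrt mu"
    using v(3,5) by (simp add: frob_norm_outer_prod vec_norm_eq_sqrt_scalar_prod)
  moreover have "A + sqrt mu \<cdot>\<^sub>m outer_prod ((1 / sqrt mu) \<cdot>\<^sub>v (N *\<^sub>v v)) v = X"
    unfolding X_def using mu by (simp add: smult_outer_prod_inverse_smult)
  moreover have "nonneg_vec ((1 / sqrt mu) \<cdot>\<^sub>v (N *\<^sub>v v))"
    using v(4) Nv mu by (auto simp: nonneg_vec_iff[of _ d] less_eq_vec_def)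
  ultimately show ?thesis
    unfolding Let_def gram
    using mu v Nv X nonneg real_eigenvalue_abs_le_real_spectral_radius[OF X \<open>eigenvalue X 1\<close>]
      frob_norm_diff_ge_if_spectral_radius_ge_1[OF mu_min _ d] nonneg_mat_add_outer_prod[OF A nonneg Nv]
    by (auto simp: nonneg_vec_iff vec_norm_eq_sqrt_scalar_prod X_def)
qed

end
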